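(* The function $$v(x)=\alpha\,\frac{\langle x,b_0^\star\rangle^{1-\gamma}}{1-\gamma},\qquad x\in X^{b_0^\star}_{++},\qquad \alpha=\gamma^\gamma\left(\frac{\int_Df(\theta)^{1/\gamma}(\eta(\theta)b_0^\star(\theta))^{\frac{\gamma-1}{\gamma}}\mu(d\theta)}{\rho-\lambda_0^\star(1-\gamma)}\right)^{\gamma},$$ is a classical solution on $X^{b_0^\star}_{++}$ of the HJB equation $\rho v(x)=\langle x,L^\star\nabla v(x)\rangle+\mathcal H(\nabla v(x))$.
   Context: $X$ is either $L^p(D,\mu)$, $p\in[1,\infty)$, $\mu$ $\sigma$-finite, or $C(D)$ (sup-norm, pointwise order) for a compact metric space $D$ with a Borel measure $\mu$. $X^\star$ is the dual, $\langle\cdot,\cdot\rangle$ the pairing, ordered by $\varphi^\star\ge0$ iff $\langle f,\varphi^\star\rangle\ge0$ for all $f\ge0$; $X^\star_{++}=\{\varphi^\star:\langle f,\varphi^\star\rangle>0$ for all $0\neq f\ge0\}$, $X_{++}=\{f:\langle f,\varphi^\star\rangle>0$ for all $0\ne\varphi^\star\ge0\}$, $X^{\varphi^\star}_{++}=\{f:\langle f,\varphi^\star\rangle>0\}$, $X_+$ the nonnegative cone. $L:D(L)\subseteq X\to X$ is closed, densely defined, generates a $C_0$-semigroup with $e^{tL}(X_{++})\subseteq X_{++}$; $L^\star$ is its adjoint. $(Nz)(\theta)=\eta(\theta)z(\theta)$, $\mathcal U(z)=\int_D\frac{z(\theta)^{1-\gamma}}{1-\gamma}f(\theta)\mu(d\theta)$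 for $z\in X_+$, with $\eta,f:D\to(0,\infty)$ measurable, $\gamma\in(0,1)\cup(1,\infty)$, $\rho>0$. $\mathcal H(q^\star)=\sup_{z\in X_+}\{\mathcal U(z)-\langle Nz,q^\star\rangle\}$. Assumptions: (i) there is $b_0^\star\in X^\star_{++}\cap D(L^\star)$ and $\lambda_0^\star\in\mathbb R$ with $L^\star b_0^\star=\lambda_0^\star b_0^\star$; (ii) $\rho>\lambda_0^\star(1-\gamma)$; (iii) if $\gamma>1$, $(b_0^\star)^{1-\gamma}/f\in L^\infty(D,\mu)$; (iv) if $X=C(D)$, the measure $b_0^\star$ is absolutely continuous w.r.t. $\mu$ with density (also denoted $b_0^\star$), and $b_0^\star,\eta,f\in C(D;(0,\infty))$; (v) if $X=L^p$, $\eta,f\in L^\infty(D,\mu;(0,\infty))$ and $\int_Df^{1/\gamma}(\eta b_0^\star)^{\frac{\gamma-1}{\gamma}}d\mu<\infty$, $\int_D(f/(\eta b_0^\star))^{p/\gamma}d\mu<\infty$. A classical solution on $X^{b_0^\star}_{++}$ is a Fréchet $C^1$ function $v$ there with $\nabla v\in C(X^{b_0^\star}_{++};D(L^\star))$ satisfying the equation at every point. *)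

theory Defs
  imports "HOL-Analysis.Analysis"
begin

text \<open>The state space X is an abstract real Banach space 'x together with a representation map
  E : X \<rightarrow> (D \<rightarrow> R) which identifies X isometrically and linearly with L^p(D,mu)
  (elements up to mu-a.e. equality) or with C(D) (sup-norm).  The flag isC selects the case.\<close>

definition Lp_model :: "real \<Rightarrow> 'd measure \<Rightarrow> ('x::banach \<Rightarrow> 'd \<Rightarrow> real) \<Rightarrow> bool" where
  "Lp_model p \<mu> E \<longleftrightarrow>
     p \<ge> 1 \<and> sigma_finite_measure \<mu> \<and>
     (\<forall>x. E x \<in> borel_measurable \<mu> \<and> integrable \<mu> (\<lambda>\<theta>. \<bar>E x \<theta>\<bar> powr p)) \<and>
     (\<forall>x. norm x = (\<integral>\<theta>. \<bar>E x \<theta>\<bar> powr p \<partial>\<mu>) powr (1/p)) \<and>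
     (\<forall>x y. AE \<theta> in \<mu>. E (x + y) \<theta> = E x \<theta> + E y \<theta>) \<and>
     (\<forall>c x. AE \<theta> in \<mu>. E (c *\<^sub>R x) \<theta> = c * E x \<theta>) \<and>
     (\<forall>g \<in> borel_measurable \<mu>. integrable \<mu> (\<lambda>\<theta>. \<bar>g \<theta>\<bar> powr p) \<longrightarrow>
        (\<exists>x. AE \<theta> in \<mu>. E x \<theta> = g \<theta>))"

definition C_model :: "('d::metric_space) measure \<Rightarrow> ('x::banach \<Rightarrow> 'd \<Rightarrow> real) \<Rightarrow> bool" where
  "C_model \<mu> E \<longleftrightarrow>
     compact (space \<mu>) \<and> sets \<mu> = sets (restrict_space borel (space \<mu>)) \<and>
     (\<forall>x. continuous_on (space \<mu>) (E x)) \<and>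
     (\<forall>x. norm x = (if space \<mu> = {} then 0 else (SUP \<theta>\<in>space \<mu>. \<bar>E x \<theta>\<bar>))) \<and>
     (\<forall>x y. \<forall>\<theta>\<in>space \<mu>. E (x + y) \<theta> = E x \<theta> + E y \<theta>) \<and>
     (\<forall>c x. \<forall>\<theta>\<in>space \<mu>. E (c *\<^sub>R x) \<theta> = c * E x \<theta>) \<and>
     (\<forall>g. continuous_on (space \<mu>) g \<longrightarrow> (\<exists>x. \<forall>\<theta>\<in>space \<mu>. E x \<theta> = g \<theta>))"

definition agree :: "bool \<Rightarrow> 'd measure \<Rightarrow> ('d \<Rightarrow> real) \<Rightarrow> ('d \<Rightarrow> real) \<Rightarrow> bool" where
  "agree isC \<mu> g h \<longleftrightarrow>
     (if isC then (\<forall>\<theta>\<in>space \<mu>. g \<theta> = h \<theta>) else (AE \<theta> in \<mu>. g \<theta> = h \<theta>))"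

definition Xnonneg :: "bool \<Rightarrow> 'd measure \<Rightarrow> ('x \<Rightarrow> 'd \<Rightarrow> real) \<Rightarrow> 'x \<Rightarrow> bool" where
  "Xnonneg isC \<mu> E x \<longleftrightarrow>
     (if isC then (\<forall>\<theta>\<in>space \<mu>. E x \<theta> \<ge> 0) else (AE \<theta> in \<mu>. E x \<theta> \<ge> 0))"

definition dual_nonneg :: "bool \<Rightarrow> 'd measure \<Rightarrow> ('x::real_normed_vector \<Rightarrow> 'd \<Rightarrow> real)
    \<Rightarrow> ('x \<Rightarrow>\<^sub>L real) \<Rightarrow> bool" where
  "dual_nonneg isC \<mu> E \<phi> \<longleftrightarrow> (\<forall>f. Xnonneg isC \<mu> E f \<longrightarrow> blinfun_apply \<phi> f \<ge> 0)"

definition Xstar_pp :: "bool \<Rightarrow> 'd measure \<Rightarrow> ('x::real_normed_vector \<Rightarrow> 'd \<Rightarrow> real)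
    \<Rightarrow> ('x \<Rightarrow>\<^sub>L real) set" where
  "Xstar_pp isC \<mu> E = {\<phi>. \<forall>f. f \<noteq> 0 \<and> Xnonneg isC \<mu> E f \<longrightarrow> blinfun_apply \<phi> f > 0}"

definition X_pp :: "bool \<Rightarrow> 'd measure \<Rightarrow> ('x::real_normed_vector \<Rightarrow> 'd \<Rightarrow> real) \<Rightarrow> 'x set" where
  "X_pp isC \<mu> E = {f. \<forall>\<phi>. \<phi> \<noteq> 0 \<and> dual_nonneg isC \<mu> E \<phi> \<longrightarrow> blinfun_apply \<phi> f > 0}"

definition C0_semigroup :: "(real \<Rightarrow> ('x::real_normed_vector \<Rightarrow>\<^sub>L 'x)) \<Rightarrow> bool" where
  "C0_semigroup T \<longleftrightarrow> T 0 = id_blinfun \<and>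
     (\<forall>s\<ge>0. \<forall>t\<ge>0. T (s + t) = T s o\<^sub>L T t) \<and>
     (\<forall>x. ((\<lambda>t. blinfun_apply (T t) x) \<longlongrightarrow> x) (at_right 0))"

definition is_generator :: "(real \<Rightarrow> ('x::real_normed_vector \<Rightarrow>\<^sub>L 'x)) \<Rightarrow> 'x set \<Rightarrow> ('x \<Rightarrow> 'x) \<Rightarrow> bool" where
  "is_generator T DL L \<longleftrightarrow>
     DL = {x. \<exists>y. ((\<lambda>h. (blinfun_apply (T h) x - x) /\<^sub>R h) \<longlongrightarrow> y) (at_right 0)} \<and>
     (\<forall>x\<in>DL. ((\<lambda>h. (blinfun_apply (T h) x - x) /\<^sub>R h) \<longlongrightarrow> L x) (at_right 0))"

definition adj_dom :: "'x set \<Rightarrow> ('x \<Rightarrow> 'x) \<Rightarrow> ('x::real_normed_vector \<Rightarrow>\<^sub>L real) set" where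
  "adj_dom DL L = {\<phi>. \<exists>\<psi>::'x \<Rightarrow>\<^sub>L real. \<forall>x\<in>DL. blinfun_apply \<phi> (L x) = blinfun_apply \<psi> x}"

definition adj_op :: "'x set \<Rightarrow> ('x \<Rightarrow> 'x) \<Rightarrow> ('x::real_normed_vector \<Rightarrow>\<^sub>L real) \<Rightarrow> ('x \<Rightarrow>\<^sub>L real)" where
  "adj_op DL L \<phi> = (THE \<psi>. \<forall>x\<in>DL. blinfun_apply \<phi> (L x) = blinfun_apply \<psi> x)"

definition Nop :: "bool \<Rightarrow> 'd measure \<Rightarrow> ('x \<Rightarrow> 'd \<Rightarrow> real) \<Rightarrow> ('d \<Rightarrow> real) \<Rightarrow> 'x \<Rightarrow> 'x" where
  "Nop isC \<mu> E \<eta> z = (SOME y. agree isC \<mu> (E y) (\<lambda>\<theta>. \<eta> \<theta> * E z \<theta>))"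

text \<open>Utility U(z) = int z^(1-gamma)/(1-gamma) f dmu, extended-real valued
  (possibly +infinity if gamma<1, possibly -infinity if gamma>1; z^(1-gamma) = +infinity where z = 0, gamma>1).\<close>
definition Uop :: "real \<Rightarrow> 'd measure \<Rightarrow> ('x \<Rightarrow> 'd \<Rightarrow> real) \<Rightarrow> ('d \<Rightarrow> real) \<Rightarrow> 'x \<Rightarrow> ereal" where
  "Uop \<gamma> \<mu> E f z =
     (if \<gamma> < 1
      then enn2ereal (\<integral>\<^sup>+\<theta>. ennreal (E z \<theta> powr (1 - \<gamma>) * f \<theta> / (1 - \<gamma>)) \<partial>\<mu>)
      else - enn2ereal (\<integral>\<^sup>+\<theta>. (if E z \<theta> > 0 then ennreal (E z \<theta> powr (1 - \<gamma>) * f \<theta> / (\<gamma> - 1))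
                                 else \<infinity>) \<partial>\<mu>))"

definition Hop :: "bool \<Rightarrow> 'd measure \<Rightarrow> ('x::real_normed_vector \<Rightarrow> 'd \<Rightarrow> real) \<Rightarrow> real
    \<Rightarrow> ('d \<Rightarrow> real) \<Rightarrow> ('d \<Rightarrow> real) \<Rightarrow> ('x \<Rightarrow>\<^sub>L real) \<Rightarrow> ereal" where
  "Hop isC \<mu> E \<gamma> f \<eta> q =
     (SUP z \<in> {z. Xnonneg isC \<mu> E z}. Uop \<gamma> \<mu> E f z - ereal (blinfun_apply q (Nop isC \<mu> E \<eta> z)))"

text \<open>Classical solution on an open set S of rho v(x) = <x, L* grad v(x)> + H(grad v(x)):
  v Frechet C^1 on S with gradient in D(L*), continuous into D(L*) with the graph norm,
  and the equation holds at every point of S.\<close>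
definition HJB_classical_solution :: "'x set \<Rightarrow> ('x::real_normed_vector \<Rightarrow> real) \<Rightarrow> real
    \<Rightarrow> ('x \<Rightarrow>\<^sub>L real) set \<Rightarrow> (('x \<Rightarrow>\<^sub>L real) \<Rightarrow> ('x \<Rightarrow>\<^sub>L real)) \<Rightarrow> (('x \<Rightarrow>\<^sub>L real) \<Rightarrow> ereal) \<Rightarrow> bool" where
  "HJB_classical_solution S v \<rho> DLs Ls H \<longleftrightarrow> open S \<and>
     (\<exists>v'. (\<forall>x\<in>S. (v has_derivative blinfun_apply (v' x)) (at x)) \<and>
           continuous_on S v' \<and>
           (\<forall>x\<in>S. v' x \<in> DLs) \<and> continuous_on S (\<lambda>x. Ls (v' x)) \<and>
           (\<forall>x\<in>S. ereal (\<rho> * v x) = ereal (blinfun_apply (Ls (v' x)) x) + H (v' x)))"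

end

theory Submission
  imports Defs
begin

(* For q = c b0s with c > 0 the Hamiltonian decouples pointwise in theta: the concave map
   z |-> z^(1-gamma) f / (1-gamma) - c eta b0 z is maximised at z = (f / (c eta b0))^(1/gamma),
   with value gamma/(1-gamma) f^(1/gamma) (c eta b0)^((gamma-1)/gamma); this maximiser lies in X_+,
   so H (c b0s) = gamma/(1-gamma) c^((gamma-1)/gamma) I, where I is the integral in alpha.
   The gradient of v is alpha <x,b0s>^(-gamma) b0s, a multiple of the eigenvector b0s of L*, so
   <x, L* grad v(x)> = lam0 alpha <x,b0s>^(1-gamma), and the HJB equation becomes an identity
   between multiples of <x,b0s>^(1-gamma), which holds exactly for the stated alpha. *)

lemma crra_utility_minus_le:
  fixes g t :: real
  assumes g: "g > 0" "g \<noteq> 1" and t: "t \<ge> 0" "g > 1 \<longrightarrow> t > 0"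
  shows "t powr (1 - g) / (1 - g) - t \<le> g / (1 - g)"
proof -
  have lhs: "t powr (1 - g) / (1 - g) - t = (t powr (1 - g) - (1 - g) * t) / (1 - g)"
    using g by (simp add: field_simps)
  consider "g < 1" | "g > 1" using g by linarith
  then show ?thesis
  proof cases
    case 1
    have "t powr (1 - g) \<le> (1 - g) * t + g"
    proof (cases "t = 0")
      case False
      then show ?thesis using Youngs_inequality_0[of "1 - g" g t 1] g t 1 by simp
    qed (use g 1 in simp)
    then show ?thesis unfolding lhs using 1 by (intro divide_right_mono) auto
  next
    case 2
    then have t0: "t > 0" using t by simp
    have "t powr (1 - g) = exp ((1 - g) * ln t)" using t0 by (simp add: powr_def)
    also have "\<dots> \<ge> 1 + (1 - g) * ln t" by (rule exp_ge_add_one_self)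
    finally have "t powr (1 - g) \<ge> 1 + (1 - g) * ln t" .
    moreover have "(1 - g) * ln t \<ge> (1 - g) * (t - 1)"
      using ln_le_minus_one[OF t0] 2 by (intro mult_left_mono_neg) auto
    ultimately have "t powr (1 - g) \<ge> (1 - g) * t + g" by (simp add: algebra_simps)
    then show ?thesis unfolding lhs using 2 by (intro divide_right_mono_neg) auto
  qed
qed

lemma crra_maximizer_eqs:
  fixes a f g :: real
  assumes g: "g > 0" and a: "a > 0" and f: "f > 0"
  shows "((f / a) powr (1 / g)) powr (1 - g) * f = f powr (1 / g) * a powr ((g - 1) / g)"
    and "a * (f / a) powr (1 / g) = f powr (1 / g) * a powr ((g - 1) / g)"
proof -
  have "(g - 1) / g = 1 - 1 / g" using g by (simp add: field_simps)
  then have K: "f powr (1 / g) * a powr ((g - 1) / g) = a * (f / a) powr (1 / g)"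
    using a f by (simp add: powr_diff powr_divide)
  have "((f / a) powr (1 / g)) powr g = f / a" using a f g by (simp add: powr_powr)
  then have "((f / a) powr (1 / g)) powr (1 - g) = (f / a) powr (1 / g) * a / f"
    using a f by (simp add: powr_diff)
  then show "((f / a) powr (1 / g)) powr (1 - g) * f = f powr (1 / g) * a powr ((g - 1) / g)"
    using K f by simp
  show "a * (f / a) powr (1 / g) = f powr (1 / g) * a powr ((g - 1) / g)"
    using K by simp
qed

lemma crra_conjugate_le:
  fixes a f g y :: real
  assumes g: "g > 0" "g \<noteq> 1" and a: "a > 0" and f: "f > 0"
    and y: "y \<ge> 0" "g > 1 \<longrightarrow> y > 0"
  shows "y powr (1 - g) * f / (1 - g) - a * y \<le> g / (1 - g) * (f powr (1 / g) * a powr ((g - 1) / g))"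
proof -
  define s where "s = (f / a) powr (1 / g)"
  define K where "K = f powr (1 / g) * a powr ((g - 1) / g)"
  define t where "t = y / s"
  have s0: "s > 0" using a f by (simp add: s_def)
  have y_eq: "y = t * s" using s0 by (simp add: t_def)
  have t: "t \<ge> 0" "g > 1 \<longrightarrow> t > 0" using y s0 by (auto simp: t_def)
  have "y powr (1 - g) * f = t powr (1 - g) * K"
    using crra_maximizer_eqs(1)[OF g(1) a f] y_eq t(1) s0
    by (simp add: powr_mult s_def K_def mult.assoc)
  moreover have "a * y = t * K"
    using crra_maximizer_eqs(2)[OF g(1) a f] y_eq by (simp add: s_def K_def)
  ultimately have "y powr (1 - g) * f / (1 - g) - a * y = K * (t powr (1 - g) / (1 - g) - t)"
    by (simp add: field_simps)
  also have "\<dots> \<le> K * (g / (1 - g))"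
    using crra_utility_minus_le[OF g t] by (intro mult_left_mono) (simp_all add: K_def)
  finally show ?thesis by (simp add: K_def mult.commute)
qed

lemma crra_HJB_balance:
  fixes \<gamma> \<rho> lam I \<alpha> s :: real
  assumes gamma: "\<gamma> > 0" "\<gamma> \<noteq> 1" and I: "I > 0" and D: "\<rho> - lam * (1 - \<gamma>) > 0" and s: "s > 0"
    and \<alpha>: "\<alpha> = \<gamma> powr \<gamma> * (I / (\<rho> - lam * (1 - \<gamma>))) powr \<gamma>"
  shows "\<rho> * (\<alpha> * s powr (1 - \<gamma>) / (1 - \<gamma>))
    = (\<alpha> * s powr (- \<gamma>)) * lam * s + \<gamma> / (1 - \<gamma>) * ((\<alpha> * s powr (- \<gamma>)) powr ((\<gamma> - 1) / \<gamma>) * I)"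
proof -
  define D where "D = \<rho> - lam * (1 - \<gamma>)"
  define q where "q = \<gamma> * I / D"
  have q: "q > 0" using gamma I D by (simp add: q_def D_def)
  have \<alpha>_q: "\<alpha> = q powr \<gamma>"
    using powr_mult[of \<gamma> "I / D" \<gamma>] gamma I D by (simp add: \<alpha> q_def D_def)
  have "(\<alpha> * s powr (- \<gamma>)) powr ((\<gamma> - 1) / \<gamma>) = \<alpha> powr ((\<gamma> - 1) / \<gamma>) * s powr (1 - \<gamma>)"
  proof -
    have "- \<gamma> * ((\<gamma> - 1) / \<gamma>) = 1 - \<gamma>" using gamma by (simp add: field_simps)
    then show ?thesis using q by (simp add: \<alpha>_q powr_mult powr_powr)
  qed
  also have "\<alpha> powr ((\<gamma> - 1) / \<gamma>) = \<alpha> / q"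
    using gamma q by (simp add: \<alpha>_q powr_powr powr_diff)
  finally have H: "\<gamma> / (1 - \<gamma>) * ((\<alpha> * s powr (- \<gamma>)) powr ((\<gamma> - 1) / \<gamma>) * I)
      = \<alpha> * s powr (1 - \<gamma>) * D / (1 - \<gamma>)"
    using gamma I D by (simp add: q_def D_def field_simps)
  have L: "(\<alpha> * s powr (- \<gamma>)) * lam * s = \<alpha> * s powr (1 - \<gamma>) * lam"
    using powr_add[of s "- \<gamma>" 1] s by simp
  show ?thesis
    unfolding H L using gamma by (simp add: D_def field_simps)
qed

lemma agree_AE:
  assumes "agree isC \<mu> g h"
  shows "AE \<theta> in \<mu>. g \<theta> = h \<theta>"
  using assms by (auto simp: agree_def split: if_splits intro: AE_I2)

lemma Xnonneg_AE_nonneg: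
  assumes "Xnonneg isC \<mu> E z"
  shows "AE \<theta> in \<mu>. E z \<theta> \<ge> 0"
  using assms by (auto simp: Xnonneg_def split: if_splits intro: AE_I2)

lemma Xnonneg_if_agree:
  assumes "agree isC \<mu> (E z) g" and "\<forall>\<theta>\<in>space \<mu>. g \<theta> \<ge> 0"
  shows "Xnonneg isC \<mu> E z"
  using assms by (auto simp: agree_def Xnonneg_def split: if_splits elim: AE_mp)

lemma Nop_agree:
  assumes "\<exists>y. agree isC \<mu> (E y) (\<lambda>\<theta>. \<eta> \<theta> * E z \<theta>)"
  shows "agree isC \<mu> (E (Nop isC \<mu> E \<eta> z)) (\<lambda>\<theta>. \<eta> \<theta> * E z \<theta>)"
  unfolding Nop_def using assms by (rule someI_ex)

context
  fixes \<mu> :: "'d measure" and E :: "'x::real_normed_vector \<Rightarrow> 'd \<Rightarrow> real" and f :: "'d \<Rightarrow> real" and \<gamma> :: real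
  assumes gamma: "\<gamma> > 0" "\<gamma> \<noteq> 1"
    and f_pos: "\<forall>\<theta>\<in>space \<mu>. f \<theta> > 0" and f_meas[measurable]: "f \<in> borel_measurable \<mu>"
    and E_meas[measurable]: "\<And>x. E x \<in> borel_measurable \<mu>"
begin

lemma Uop_eq_integral:
  assumes pos: "AE \<theta> in \<mu>. E z \<theta> > 0"
    and int: "integrable \<mu> (\<lambda>\<theta>. E z \<theta> powr (1 - \<gamma>) * f \<theta> / (1 - \<gamma>))"
  shows "Uop \<gamma> \<mu> E f z = ereal (\<integral>\<theta>. E z \<theta> powr (1 - \<gamma>) * f \<theta> / (1 - \<gamma>) \<partial>\<mu>)"
proof (cases "\<gamma> < 1")
  case True
  have nonneg: "AE \<theta> in \<mu>. 0 \<le> E z \<theta> powr (1 - \<gamma>) * f \<theta> / (1 - \<gamma>)"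
    using f_pos True by (intro AE_I2) (simp add: less_imp_le)
  then have "0 \<le> (\<integral>\<theta>. E z \<theta> powr (1 - \<gamma>) * f \<theta> / (1 - \<gamma>) \<partial>\<mu>)"
    by (rule integral_nonneg_AE)
  then show ?thesis
    using nn_integral_eq_integral[OF int nonneg] True by (simp add: Uop_def)
next
  case False
  then have g1: "\<gamma> > 1" using gamma by simp
  have int': "integrable \<mu> (\<lambda>\<theta>. E z \<theta> powr (1 - \<gamma>) * f \<theta> / (\<gamma> - 1))"
    using integrable_minus[OF int] by (simp add: minus_divide_right)
  have nonneg: "AE \<theta> in \<mu>. 0 \<le> E z \<theta> powr (1 - \<gamma>) * f \<theta> / (\<gamma> - 1)"
    using f_pos g1 by (intro AE_I2) (simp add: less_imp_le)
  have "(\<integral>\<^sup>+\<theta>. (if E z \<theta> > 0 then ennreal (E z \<theta> powr (1 - \<gamma>) * f \<theta> / (\<gamma> - 1)) else \<infinity>) \<partial>\<mu>)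
      = (\<integral>\<^sup>+\<theta>. ennreal (E z \<theta> powr (1 - \<gamma>) * f \<theta> / (\<gamma> - 1)) \<partial>\<mu>)"
    using pos by (intro nn_integral_cong_AE) auto
  also have "\<dots> = ennreal (\<integral>\<theta>. E z \<theta> powr (1 - \<gamma>) * f \<theta> / (\<gamma> - 1) \<partial>\<mu>)"
    by (rule nn_integral_eq_integral[OF int' nonneg])
  finally show ?thesis
    using integral_nonneg_AE[OF nonneg] g1
    by (simp add: Uop_def integral_minus[symmetric] minus_divide_right)
qed

lemma Uop_le_integral_lt1:
  assumes lt1: "\<gamma> < 1" and h: "integrable \<mu> h"
    and le: "AE \<theta> in \<mu>. E z \<theta> powr (1 - \<gamma>) * f \<theta> / (1 - \<gamma>) \<le> h \<theta>"
  shows "Uop \<gamma> \<mu> E f z \<le> ereal (\<integral>\<theta>. h \<theta> \<partial>\<mu>)"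
proof -
  have "AE \<theta> in \<mu>. 0 \<le> h \<theta>"
    using AE_space le by eventually_elim (use f_pos lt1 in \<open>force intro: order_trans[rotated]\<close>)
  then have h_nonneg: "AE \<theta> in \<mu>. 0 \<le> h \<theta>" "0 \<le> (\<integral>\<theta>. h \<theta> \<partial>\<mu>)"
    by (simp_all add: integral_nonneg_AE)
  have "(\<integral>\<^sup>+\<theta>. ennreal (E z \<theta> powr (1 - \<gamma>) * f \<theta> / (1 - \<gamma>)) \<partial>\<mu>) \<le> (\<integral>\<^sup>+\<theta>. ennreal (h \<theta>) \<partial>\<mu>)"
    using le by (intro nn_integral_mono_AE) (auto elim: AE_mp intro: ennreal_leI)
  also have "\<dots> = ennreal (\<integral>\<theta>. h \<theta> \<partial>\<mu>)"
    by (rule nn_integral_eq_integral[OF h h_nonneg(1)])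
  finally show ?thesis
    using lt1 h_nonneg(2) by (simp add: Uop_def less_eq_ennreal.rep_eq)
qed

lemma Uop_le_integral_gt1:
  assumes gt1: "\<gamma> > 1"
    and g: "integrable \<mu> g" "AE \<theta> in \<mu>. 0 \<le> g \<theta>" and k: "integrable \<mu> k" "AE \<theta> in \<mu>. 0 \<le> k \<theta>"
    and le: "AE \<theta> in \<mu>. E z \<theta> > 0 \<longrightarrow> E z \<theta> powr (1 - \<gamma>) * f \<theta> / (1 - \<gamma>) \<le> g \<theta> - k \<theta>"
  shows "Uop \<gamma> \<mu> E f z \<le> ereal ((\<integral>\<theta>. g \<theta> \<partial>\<mu>) - (\<integral>\<theta>. k \<theta> \<partial>\<mu>))"
proof -
  define G where "G \<theta> = (if E z \<theta> > 0 then ennreal (E z \<theta> powr (1 - \<gamma>) * f \<theta> / (\<gamma> - 1)) else \<infinity>)" for \<theta>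
  have [measurable]: "G \<in> borel_measurable \<mu>" unfolding G_def by measurable
  have [measurable]: "g \<in> borel_measurable \<mu>" using g(1) by (rule borel_measurable_integrable)
  have "ennreal (\<integral>\<theta>. k \<theta> \<partial>\<mu>) = (\<integral>\<^sup>+\<theta>. ennreal (k \<theta>) \<partial>\<mu>)"
    using nn_integral_eq_integral[OF k] by simp
  also have "\<dots> \<le> (\<integral>\<^sup>+\<theta>. (G \<theta> + ennreal (g \<theta>)) \<partial>\<mu>)"
  proof (intro nn_integral_mono_AE, use AE_space g(2) le in eventually_elim)
    case (elim \<theta>)
    show ?case
    proof (cases "E z \<theta> > 0")
      case True
      have "0 \<le> E z \<theta> powr (1 - \<gamma>) * f \<theta> / (\<gamma> - 1)"
        using f_pos elim gt1 by (simp add: less_imp_le)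
      moreover have "k \<theta> \<le> E z \<theta> powr (1 - \<gamma>) * f \<theta> / (\<gamma> - 1) + g \<theta>"
        using elim True gt1 by (simp add: field_simps)
      ultimately show ?thesis
        using elim True by (simp add: G_def ennreal_leI flip: ennreal_plus)
    qed (simp add: G_def)
  qed
  also have "\<dots> = (\<integral>\<^sup>+\<theta>. G \<theta> \<partial>\<mu>) + ennreal (\<integral>\<theta>. g \<theta> \<partial>\<mu>)"
    using nn_integral_eq_integral[OF g] by (subst nn_integral_add) simp_all
  finally have "ereal (\<integral>\<theta>. k \<theta> \<partial>\<mu>) \<le> enn2ereal (\<integral>\<^sup>+\<theta>. G \<theta> \<partial>\<mu>) + ereal (\<integral>\<theta>. g \<theta> \<partial>\<mu>)"
    using g k by (simp add: integral_nonneg_AE less_eq_ennreal.rep_eq plus_ennreal.rep_eq)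
  moreover have "Uop \<gamma> \<mu> E f z = - enn2ereal (\<integral>\<^sup>+\<theta>. G \<theta> \<partial>\<mu>)"
    using gt1 by (simp add: Uop_def G_def)
  ultimately show ?thesis
    by (cases "enn2ereal (\<integral>\<^sup>+\<theta>. G \<theta> \<partial>\<mu>)") (auto simp: algebra_simps)
qed

lemma Uop_minus_pairing_le:
  fixes a :: "'d \<Rightarrow> real"
  assumes a_meas[measurable]: "a \<in> borel_measurable \<mu>" and a_pos: "AE \<theta> in \<mu>. a \<theta> > 0"
    and z_nonneg: "AE \<theta> in \<mu>. E z \<theta> \<ge> 0"
    and int_az: "integrable \<mu> (\<lambda>\<theta>. a \<theta> * E z \<theta>)"
    and int_K: "integrable \<mu> (\<lambda>\<theta>. f \<theta> powr (1 / \<gamma>) * a \<theta> powr ((\<gamma> - 1) / \<gamma>))"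
  shows "Uop \<gamma> \<mu> E f z - ereal (\<integral>\<theta>. a \<theta> * E z \<theta> \<partial>\<mu>)
    \<le> ereal (\<gamma> / (1 - \<gamma>) * (\<integral>\<theta>. f \<theta> powr (1 / \<gamma>) * a \<theta> powr ((\<gamma> - 1) / \<gamma>) \<partial>\<mu>))"
proof -
  define K where "K \<theta> = f \<theta> powr (1 / \<gamma>) * a \<theta> powr ((\<gamma> - 1) / \<gamma>)" for \<theta>
  have int_K': "integrable \<mu> K" using int_K by (simp add: K_def[abs_def])
  have pointwise: "AE \<theta> in \<mu>. (\<gamma> > 1 \<longrightarrow> E z \<theta> > 0) \<longrightarrow>
      E z \<theta> powr (1 - \<gamma>) * f \<theta> / (1 - \<gamma>) \<le> a \<theta> * E z \<theta> + \<gamma> / (1 - \<gamma>) * K \<theta>"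
    using AE_space a_pos z_nonneg
  proof eventually_elim
    case (elim \<theta>)
    then show ?case
      using crra_conjugate_le[OF gamma elim(2) _ elim(3), of "f \<theta>"] f_pos by (auto simp: K_def)
  qed
  show ?thesis
  proof (cases "\<gamma> < 1")
    case True
    have "Uop \<gamma> \<mu> E f z \<le> ereal (\<integral>\<theta>. a \<theta> * E z \<theta> + \<gamma> / (1 - \<gamma>) * K \<theta> \<partial>\<mu>)"
    proof (rule Uop_le_integral_lt1[OF True])
      show "AE \<theta> in \<mu>. E z \<theta> powr (1 - \<gamma>) * f \<theta> / (1 - \<gamma>) \<le> a \<theta> * E z \<theta> + \<gamma> / (1 - \<gamma>) * K \<theta>"
        using pointwise by eventually_elim (use True in simp)
    qed (use int_az int_K' in simp)
    also have "(\<integral>\<theta>. a \<theta> * E z \<theta> + \<gamma> / (1 - \<gamma>) * K \<theta> \<partial>\<mu>)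
        = (\<integral>\<theta>. a \<theta> * E z \<theta> \<partial>\<mu>) + \<gamma> / (1 - \<gamma>) * (\<integral>\<theta>. K \<theta> \<partial>\<mu>)"
      using int_az int_K' by simp
    finally show ?thesis
      by (simp add: ereal_minus_le_iff add.commute K_def)
  next
    case False
    then have gt1: "\<gamma> > 1" using gamma by simp
    have "Uop \<gamma> \<mu> E f z \<le> ereal ((\<integral>\<theta>. a \<theta> * E z \<theta> \<partial>\<mu>) - (\<integral>\<theta>. \<gamma> / (\<gamma> - 1) * K \<theta> \<partial>\<mu>))"
    proof (rule Uop_le_integral_gt1[OF gt1 int_az])
      show "AE \<theta> in \<mu>. 0 \<le> a \<theta> * E z \<theta>"
        using a_pos z_nonneg by eventually_elim simp
      show "AE \<theta> in \<mu>. E z \<theta> > 0 \<longrightarrow>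
          E z \<theta> powr (1 - \<gamma>) * f \<theta> / (1 - \<gamma>) \<le> a \<theta> * E z \<theta> - \<gamma> / (\<gamma> - 1) * K \<theta>"
        using pointwise by eventually_elim (use gt1 in \<open>simp add: field_simps\<close>)
      show "AE \<theta> in \<mu>. 0 \<le> \<gamma> / (\<gamma> - 1) * K \<theta>"
        using gt1 by (simp add: K_def)
    qed (use int_K' in simp)
    moreover have "\<gamma> / (1 - \<gamma>) * (\<integral>\<theta>. K \<theta> \<partial>\<mu>) = - (\<integral>\<theta>. \<gamma> / (\<gamma> - 1) * K \<theta> \<partial>\<mu>)"
      using gt1 by (simp add: field_simps)
    ultimately show ?thesis
      by (simp add: ereal_minus_le_iff add.commute K_def)
  qed
qed

lemma Uop_minus_pairing_eq:
  fixes a :: "'d \<Rightarrow> real"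
  assumes a_meas[measurable]: "a \<in> borel_measurable \<mu>" and a_pos: "AE \<theta> in \<mu>. a \<theta> > 0"
    and z: "AE \<theta> in \<mu>. E z \<theta> = (f \<theta> / a \<theta>) powr (1 / \<gamma>)"
    and int_K: "integrable \<mu> (\<lambda>\<theta>. f \<theta> powr (1 / \<gamma>) * a \<theta> powr ((\<gamma> - 1) / \<gamma>))"
  shows "Uop \<gamma> \<mu> E f z - ereal (\<integral>\<theta>. a \<theta> * E z \<theta> \<partial>\<mu>)
    = ereal (\<gamma> / (1 - \<gamma>) * (\<integral>\<theta>. f \<theta> powr (1 / \<gamma>) * a \<theta> powr ((\<gamma> - 1) / \<gamma>) \<partial>\<mu>))"
proof -
  define K where "K \<theta> = f \<theta> powr (1 / \<gamma>) * a \<theta> powr ((\<gamma> - 1) / \<gamma>)" for \<theta>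
  have int_K': "integrable \<mu> K" using int_K by (simp add: K_def[abs_def])
  have [measurable]: "K \<in> borel_measurable \<mu>" unfolding K_def by measurable
  have ae: "AE \<theta> in \<mu>. E z \<theta> > 0 \<and> E z \<theta> powr (1 - \<gamma>) * f \<theta> / (1 - \<gamma>) = K \<theta> / (1 - \<gamma>)
      \<and> a \<theta> * E z \<theta> = K \<theta>"
    using AE_space a_pos z
  proof eventually_elim
    case (elim \<theta>)
    then have "f \<theta> > 0" using f_pos by auto
    then show ?case
      using crra_maximizer_eqs[OF gamma(1) elim(2), of "f \<theta>"] elim by (simp add: K_def)
  qed
  have "Uop \<gamma> \<mu> E f z = ereal (\<integral>\<theta>. K \<theta> / (1 - \<gamma>) \<partial>\<mu>)"
  proof -
    have "integrable \<mu> (\<lambda>\<theta>. E z \<theta> powr (1 - \<gamma>) * f \<theta> / (1 - \<gamma>))"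
      using int_K' ae by (subst integrable_cong_AE[where g = "\<lambda>\<theta>. K \<theta> / (1 - \<gamma>)"]) auto
    then show ?thesis
      using ae by (subst Uop_eq_integral) (auto intro!: integral_cong_AE)
  qed
  moreover have "(\<integral>\<theta>. a \<theta> * E z \<theta> \<partial>\<mu>) = (\<integral>\<theta>. K \<theta> \<partial>\<mu>)"
    using ae by (intro integral_cong_AE) auto
  ultimately show ?thesis
    using gamma by (simp add: K_def[symmetric] field_simps)
qed

lemma Hop_eq_of_density:
  fixes q :: "'x \<Rightarrow>\<^sub>L real" and \<eta> w :: "'d \<Rightarrow> real"
  assumes density: "\<And>x. integrable \<mu> (\<lambda>\<theta>. E x \<theta> * w \<theta>) \<and> q x = (\<integral>\<theta>. E x \<theta> * w \<theta> \<partial>\<mu>)"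
    and [measurable]: "\<eta> \<in> borel_measurable \<mu>" "w \<in> borel_measurable \<mu>"
    and Nop: "\<And>z. AE \<theta> in \<mu>. E (Nop isC \<mu> E \<eta> z) \<theta> = \<eta> \<theta> * E z \<theta>"
    and pos: "AE \<theta> in \<mu>. \<eta> \<theta> * w \<theta> > 0"
    and int_K: "integrable \<mu> (\<lambda>\<theta>. f \<theta> powr (1 / \<gamma>) * (\<eta> \<theta> * w \<theta>) powr ((\<gamma> - 1) / \<gamma>))"
    and maximizer: "\<exists>z. Xnonneg isC \<mu> E z \<and> (AE \<theta> in \<mu>. E z \<theta> = (f \<theta> / (\<eta> \<theta> * w \<theta>)) powr (1 / \<gamma>))"
  shows "Hop isC \<mu> E \<gamma> f \<eta> q
    = ereal (\<gamma> / (1 - \<gamma>) * (\<integral>\<theta>. f \<theta> powr (1 / \<gamma>) * (\<eta> \<theta> * w \<theta>) powr ((\<gamma> - 1) / \<gamma>) \<partial>\<mu>))"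
    (is "_ = ereal ?h")
proof -
  have pairing: "integrable \<mu> (\<lambda>\<theta>. (\<eta> \<theta> * w \<theta>) * E z \<theta>)
      \<and> q (Nop isC \<mu> E \<eta> z) = (\<integral>\<theta>. (\<eta> \<theta> * w \<theta>) * E z \<theta> \<partial>\<mu>)" for z
  proof -
    have ae: "AE \<theta> in \<mu>. E (Nop isC \<mu> E \<eta> z) \<theta> * w \<theta> = (\<eta> \<theta> * w \<theta>) * E z \<theta>"
      using Nop[of z] by eventually_elim simp
    have m1: "(\<lambda>\<theta>. E (Nop isC \<mu> E \<eta> z) \<theta> * w \<theta>) \<in> borel_measurable \<mu>" by measurable
    have m2: "(\<lambda>\<theta>. (\<eta> \<theta> * w \<theta>) * E z \<theta>) \<in> borel_measurable \<mu>" by measurable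
    show ?thesis
      using density[of "Nop isC \<mu> E \<eta> z"] integrable_cong_AE[OF m1 m2 ae] integral_cong_AE[OF m1 m2 ae]
      by simp
  qed
  have weight_meas: "(\<lambda>\<theta>. \<eta> \<theta> * w \<theta>) \<in> borel_measurable \<mu>" by measurable
  have upper: "Uop \<gamma> \<mu> E f z - ereal (q (Nop isC \<mu> E \<eta> z)) \<le> ereal ?h" if "Xnonneg isC \<mu> E z" for z
    using Uop_minus_pairing_le[OF weight_meas pos Xnonneg_AE_nonneg[OF that] conjunct1[OF pairing] int_K]
    by (simp only: conjunct2[OF pairing])
  obtain z0 where z0: "Xnonneg isC \<mu> E z0" "AE \<theta> in \<mu>. E z0 \<theta> = (f \<theta> / (\<eta> \<theta> * w \<theta>)) powr (1 / \<gamma>)"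
    using maximizer by blast
  have attained: "Uop \<gamma> \<mu> E f z0 - ereal (q (Nop isC \<mu> E \<eta> z0)) = ereal ?h"
    using Uop_minus_pairing_eq[OF weight_meas pos z0(2) int_K] by (simp only: conjunct2[OF pairing])
  show ?thesis
    unfolding Hop_def
  proof (rule SUP_eqI)
    show "ereal ?h \<le> y"
      if "\<And>z. z \<in> {z. Xnonneg isC \<mu> E z} \<Longrightarrow> Uop \<gamma> \<mu> E f z - ereal (q (Nop isC \<mu> E \<eta> z)) \<le> y" for y
      using that[of z0] z0(1) attained by simp
  qed (use upper in blast)
qed

end

lemma adj_op_eqI:
  assumes dense: "closure DL = UNIV" and \<psi>: "\<forall>x\<in>DL. blinfun_apply \<phi> (L x) = blinfun_apply \<psi> x"
  shows "adj_op DL L \<phi> = \<psi>"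
proof -
  have "\<xi> = \<psi>" if \<xi>: "\<forall>x\<in>DL. blinfun_apply \<phi> (L x) = blinfun_apply \<xi> x" for \<xi>
  proof -
    have "closed {x. blinfun_apply \<xi> x = blinfun_apply \<psi> x}"
      by (intro closed_Collect_eq) (auto intro: continuous_intros)
    moreover have "DL \<subseteq> {x. blinfun_apply \<xi> x = blinfun_apply \<psi> x}"
      using \<xi> \<psi> by auto
    ultimately have "closure DL \<subseteq> {x. blinfun_apply \<xi> x = blinfun_apply \<psi> x}"
      by (simp add: closure_minimal)
    then show "\<xi> = \<psi>" using dense by (auto intro: blinfun_eqI)
  qed
  then show ?thesis
    unfolding adj_op_def using \<psi> by (intro the_equality) auto
qed

lemma adj_eigenvector_scaleR:
  assumes dense: "closure DL = UNIV"
    and eigen: "\<phi> \<in> adj_dom DL L" "adj_op DL L \<phi> = lam *\<^sub>R \<phi>"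
  shows "c *\<^sub>R \<phi> \<in> adj_dom DL L" and "adj_op DL L (c *\<^sub>R \<phi>) = (c * lam) *\<^sub>R \<phi>"
proof -
  obtain \<psi> where \<psi>: "\<forall>x\<in>DL. blinfun_apply \<phi> (L x) = blinfun_apply \<psi> x"
    using eigen(1) unfolding adj_dom_def by blast
  then have "\<psi> = lam *\<^sub>R \<phi>" using adj_op_eqI[OF dense] eigen(2) by metis
  then have scaled: "\<forall>x\<in>DL. blinfun_apply (c *\<^sub>R \<phi>) (L x) = blinfun_apply ((c * lam) *\<^sub>R \<phi>) x"
    using \<psi> by (simp add: scaleR_blinfun.rep_eq)
  then show "c *\<^sub>R \<phi> \<in> adj_dom DL L" unfolding adj_dom_def by blast
  show "adj_op DL L (c *\<^sub>R \<phi>) = (c * lam) *\<^sub>R \<phi>" using adj_op_eqI[OF dense scaled] .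
qed

lemma has_derivative_crra_of_functional:
  fixes b :: "'a::real_normed_vector \<Rightarrow>\<^sub>L real"
  assumes "blinfun_apply b x > 0" and "\<gamma> \<noteq> 1"
  shows "((\<lambda>y. \<alpha> * blinfun_apply b y powr (1 - \<gamma>) / (1 - \<gamma>)) has_derivative
    blinfun_apply ((\<alpha> * blinfun_apply b x powr (- \<gamma>)) *\<^sub>R b)) (at x)"
proof -
  have "((\<lambda>y. \<alpha> / (1 - \<gamma>) * blinfun_apply b y powr (1 - \<gamma>)) has_derivative
      (\<lambda>h. blinfun_apply b h * (\<alpha> / (1 - \<gamma>) * ((1 - \<gamma>) * blinfun_apply b x powr (1 - \<gamma> - 1))))) (at x)"
    by (rule DERIV_compose_FDERIV[OF DERIV_cmult[OF has_real_derivative_powr[OF assms(1)]]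
        bounded_linear_imp_has_derivative[OF blinfun.bounded_linear_right]])
  then show ?thesis
    using assms(2) by (simp add: scaleR_blinfun.rep_eq mult.commute)
qed

lemma HJB_classical_solution_eigenfunctional:
  fixes b :: "'x::real_normed_vector \<Rightarrow>\<^sub>L real" and H :: "('x \<Rightarrow>\<^sub>L real) \<Rightarrow> ereal"
  assumes dense: "closure DL = UNIV" and eigen: "b \<in> adj_dom DL L" "adj_op DL L b = lam *\<^sub>R b"
    and gamma: "\<gamma> > 0" "\<gamma> \<noteq> 1" and D: "\<rho> - lam * (1 - \<gamma>) > 0"
    and H: "\<And>c. c > 0 \<Longrightarrow> H (c *\<^sub>R b) = ereal (\<gamma> / (1 - \<gamma>) * (c powr ((\<gamma> - 1) / \<gamma>) * I))"
    and I_pos: "\<And>x. blinfun_apply b x > 0 \<Longrightarrow> I > 0"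
  shows "HJB_classical_solution {x. blinfun_apply b x > 0}
    (\<lambda>x. (\<gamma> powr \<gamma> * (I / (\<rho> - lam * (1 - \<gamma>))) powr \<gamma>) * blinfun_apply b x powr (1 - \<gamma>) / (1 - \<gamma>))
    \<rho> (adj_dom DL L) (adj_op DL L) H"
proof -
  define \<alpha> where "\<alpha> = \<gamma> powr \<gamma> * (I / (\<rho> - lam * (1 - \<gamma>))) powr \<gamma>"
  define S where "S = {x. blinfun_apply b x > 0}"
  define v' where "v' x = (\<alpha> * blinfun_apply b x powr (- \<gamma>)) *\<^sub>R b" for x
  note adj = adj_eigenvector_scaleR[OF dense eigen]
  have "open S"
    unfolding S_def by (intro open_Collect_less) (auto intro: continuous_intros)
  moreover have "((\<lambda>y. \<alpha> * blinfun_apply b y powr (1 - \<gamma>) / (1 - \<gamma>)) has_derivative blinfun_apply (v' x)) (at x)"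
    if "x \<in> S" for x
    using has_derivative_crra_of_functional[of b x \<gamma> \<alpha>] that gamma by (simp add: S_def v'_def)
  moreover have "continuous_on S v'"
    unfolding v'_def S_def
    by (intro continuous_intros continuous_on_powr') (auto intro: continuous_intros)
  moreover have "continuous_on S (\<lambda>x. adj_op DL L (v' x))"
    unfolding v'_def adj(2) S_def
    by (intro continuous_intros continuous_on_powr') (auto intro: continuous_intros)
  moreover have "ereal (\<rho> * (\<alpha> * blinfun_apply b x powr (1 - \<gamma>) / (1 - \<gamma>)))
      = ereal (blinfun_apply (adj_op DL L (v' x)) x) + H (v' x)" if "x \<in> S" for x
  proof -
    define s where "s = blinfun_apply b x"
    have s: "s > 0" and I: "I > 0" using that I_pos unfolding S_def s_def by auto
    then have "\<alpha> * s powr (- \<gamma>) > 0" using gamma D by (simp add: \<alpha>_def)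
    then have "H (v' x) = ereal (\<gamma> / (1 - \<gamma>) * ((\<alpha> * s powr (- \<gamma>)) powr ((\<gamma> - 1) / \<gamma>) * I))"
      unfolding v'_def s_def by (rule H)
    moreover have "blinfun_apply (adj_op DL L (v' x)) x = (\<alpha> * s powr (- \<gamma>)) * lam * s"
      by (simp add: v'_def adj(2) s_def scaleR_blinfun.rep_eq)
    ultimately show ?thesis
      using crra_HJB_balance[OF gamma I D s \<alpha>_def] by (simp add: s_def)
  qed
  ultimately show ?thesis
    unfolding HJB_classical_solution_def S_def[symmetric] \<alpha>_def[symmetric]
    using adj(1) by (intro conjI exI[of _ v']) (auto simp: v'_def)
qed

lemma integrable_abs_powr_le_one:
  fixes g h :: "'d \<Rightarrow> real"
  assumes "integrable \<mu> h" and "g \<in> borel_measurable \<mu>" and "p \<ge> 1"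
    and "\<And>\<theta>. 0 \<le> g \<theta>" "\<And>\<theta>. g \<theta> \<le> h \<theta>" "\<And>\<theta>. g \<theta> \<le> 1"
  shows "integrable \<mu> (\<lambda>\<theta>. \<bar>g \<theta>\<bar> powr p)"
proof (rule Bochner_Integration.integrable_bound[OF assms(1)])
  show "AE \<theta> in \<mu>. norm (\<bar>g \<theta>\<bar> powr p) \<le> norm (h \<theta>)"
  proof (intro AE_I2)
    fix \<theta>
    have "\<bar>g \<theta>\<bar> powr p \<le> \<bar>g \<theta>\<bar> powr 1" using powr_mono'[of 1 p "\<bar>g \<theta>\<bar>"] assms by simp
    also have "\<dots> \<le> h \<theta>" using assms by simp
    finally show "norm (\<bar>g \<theta>\<bar> powr p) \<le> norm (h \<theta>)" using assms(4,5)[of \<theta>] by simp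
  qed
qed (use assms(2) in measurable)

lemma Lp_model_zero_AE:
  assumes "Lp_model p \<mu> E"
  shows "AE \<theta> in \<mu>. E 0 \<theta> = 0"
proof -
  have "AE \<theta> in \<mu>. E (0 + 0) \<theta> = E 0 \<theta> + E 0 \<theta>" using assms unfolding Lp_model_def by blast
  then show ?thesis by eventually_elim simp
qed

lemma Lp_model_density_pos:
  fixes \<mu> :: "'d measure" and E :: "'x::banach \<Rightarrow> 'd \<Rightarrow> real"
  assumes model: "Lp_model p \<mu> E" and \<phi>_pos: "\<phi> \<in> Xstar_pp False \<mu> E"
    and w_meas[measurable]: "w \<in> borel_measurable \<mu>"
    and density: "\<forall>x. integrable \<mu> (\<lambda>\<theta>. E x \<theta> * w \<theta>) \<and> blinfun_apply \<phi> x = (\<integral>\<theta>. E x \<theta> * w \<theta> \<partial>\<mu>)"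
  shows "AE \<theta> in \<mu>. w \<theta> > 0"
proof -
  have p: "p \<ge> 1" and "sigma_finite_measure \<mu>" and [measurable]: "\<And>x. E x \<in> borel_measurable \<mu>"
    and surj: "\<And>g. g \<in> borel_measurable \<mu> \<Longrightarrow> integrable \<mu> (\<lambda>\<theta>. \<bar>g \<theta>\<bar> powr p) \<Longrightarrow>
      \<exists>x. AE \<theta> in \<mu>. E x \<theta> = g \<theta>"
    using model by (auto simp: Lp_model_def)
  then obtain h :: "'d \<Rightarrow> real" where [measurable]: "h \<in> borel_measurable \<mu>"
    and h: "\<And>\<theta>. 0 < h \<theta>" "\<And>\<theta>. h \<theta> \<le> 1" and h_int: "integrable \<mu> h"
    by (blast intro: sigma_finite_measure.obtain_positive_integrable_function)
  define g where "g \<theta> = h \<theta> * indicator {\<theta>\<in>space \<mu>. w \<theta> \<le> 0} \<theta>" for \<theta>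
  have g_meas[measurable]: "g \<in> borel_measurable \<mu>" unfolding g_def by measurable
  have g: "0 \<le> g \<theta>" "g \<theta> \<le> h \<theta>" "g \<theta> \<le> 1" "g \<theta> * w \<theta> \<le> 0" for \<theta>
    using h[of \<theta>] by (auto simp: g_def indicator_def mult_nonneg_nonpos less_imp_le)
  obtain x where x: "AE \<theta> in \<mu>. E x \<theta> = g \<theta>"
    using surj[OF g_meas integrable_abs_powr_le_one[OF h_int g_meas p g(1-3)]] by blast
  have "AE \<theta> in \<mu>. E x \<theta> * w \<theta> = g \<theta> * w \<theta>" using x by eventually_elim simp
  then have "blinfun_apply \<phi> x = (\<integral>\<theta>. g \<theta> * w \<theta> \<partial>\<mu>)"
    using density by (subst integral_cong_AE[symmetric]) auto
  also have "\<dots> \<le> 0"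
    using integral_nonneg_AE[where f = "\<lambda>\<theta>. - (g \<theta> * w \<theta>)"] g(4) by simp
  finally have "blinfun_apply \<phi> x \<le> 0" .
  moreover have "Xnonneg False \<mu> E x" using x g(1) by (auto simp: Xnonneg_def elim: AE_mp)
  ultimately have x0: "x = 0" using \<phi>_pos unfolding Xstar_pp_def by force
  have "AE \<theta> in \<mu>. g \<theta> = 0"
    using x Lp_model_zero_AE[OF model] unfolding x0 by eventually_elim simp
  with AE_space show ?thesis
  proof eventually_elim
    case (elim \<theta>)
    then show ?case using h(1)[of \<theta>] by (auto simp: g_def indicator_def split: if_splits)
  qed
qed

locale crra_model =
  fixes isC :: bool and p :: real and \<mu> :: "'d::metric_space measure" and E :: "'x::banach \<Rightarrow> 'd \<Rightarrow> real"
    and \<eta> f b0 :: "'d \<Rightarrow> real" and b0s :: "'x \<Rightarrow>\<^sub>L real" and \<gamma> :: real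
  assumes model: "if isC then C_model \<mu> E else Lp_model p \<mu> E"
    and eta_meas[measurable]: "\<eta> \<in> borel_measurable \<mu>" and eta_pos: "\<forall>\<theta>\<in>space \<mu>. \<eta> \<theta> > 0"
    and f_meas[measurable]: "f \<in> borel_measurable \<mu>" and f_pos: "\<forall>\<theta>\<in>space \<mu>. f \<theta> > 0"
    and gamma: "\<gamma> > 0" "\<gamma> \<noteq> 1"
    and b0_meas[measurable]: "b0 \<in> borel_measurable \<mu>"
    and b0_density: "\<forall>x. integrable \<mu> (\<lambda>\<theta>. E x \<theta> * b0 \<theta>) \<and>
                         blinfun_apply b0s x = (\<integral>\<theta>. E x \<theta> * b0 \<theta> \<partial>\<mu>)"
    and b0s_pos: "b0s \<in> Xstar_pp isC \<mu> E"
    and C_assms: "isC \<longrightarrow> continuous_on (space \<mu>) b0 \<and> (\<forall>\<theta>\<in>space \<mu>. b0 \<theta> > 0) \<and>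
                        continuous_on (space \<mu>) \<eta> \<and> continuous_on (space \<mu>) f"
    and Lp_assms: "\<not> isC \<longrightarrow> (\<exists>C. AE \<theta> in \<mu>. \<bar>\<eta> \<theta>\<bar> \<le> C) \<and> (\<exists>C. AE \<theta> in \<mu>. \<bar>f \<theta>\<bar> \<le> C) \<and>
        integrable \<mu> (\<lambda>\<theta>. f \<theta> powr (1 / \<gamma>) * (\<eta> \<theta> * b0 \<theta>) powr ((\<gamma> - 1) / \<gamma>)) \<and>
        integrable \<mu> (\<lambda>\<theta>. (f \<theta> / (\<eta> \<theta> * b0 \<theta>)) powr (p / \<gamma>))"
begin

lemma E_meas[measurable]: "E x \<in> borel_measurable \<mu>"
proof (cases isC)
  case True
  then have "continuous_on (space \<mu>) (E x)" and "sets \<mu> = sets (restrict_space borel (space \<mu>))"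
    using model by (auto simp: C_model_def)
  then show ?thesis
    by (metis borel_measurable_continuous_on_restrict measurable_cong_sets)
next
  case False
  then show ?thesis using model by (simp add: Lp_model_def)
qed

lemma exists_agree:
  assumes "g \<in> borel_measurable \<mu>"
    and "isC \<Longrightarrow> continuous_on (space \<mu>) g" and "\<not> isC \<Longrightarrow> integrable \<mu> (\<lambda>\<theta>. \<bar>g \<theta>\<bar> powr p)"
  shows "\<exists>x. agree isC \<mu> (E x) g"
  using model assms by (cases isC) (auto simp: agree_def C_model_def Lp_model_def)

lemma Nop_AE: "AE \<theta> in \<mu>. E (Nop isC \<mu> E \<eta> z) \<theta> = \<eta> \<theta> * E z \<theta>"
proof (rule agree_AE[OF Nop_agree[OF exists_agree]])
  show "continuous_on (space \<mu>) (\<lambda>\<theta>. \<eta> \<theta> * E z \<theta>)" if isC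
    using that model C_assms by (auto simp: C_model_def intro: continuous_on_mult)
  show "integrable \<mu> (\<lambda>\<theta>. \<bar>\<eta> \<theta> * E z \<theta>\<bar> powr p)" if Lp: "\<not> isC"
  proof -
    have p: "p \<ge> 1" and int: "integrable \<mu> (\<lambda>\<theta>. \<bar>E z \<theta>\<bar> powr p)"
      using Lp model by (auto simp: Lp_model_def)
    obtain C where C: "AE \<theta> in \<mu>. \<bar>\<eta> \<theta>\<bar> \<le> C" using Lp Lp_assms by blast
    show ?thesis
    proof (rule Bochner_Integration.integrable_bound)
      show "integrable \<mu> (\<lambda>\<theta>. C powr p * \<bar>E z \<theta>\<bar> powr p)" using int by simp
      show "AE \<theta> in \<mu>. norm (\<bar>\<eta> \<theta> * E z \<theta>\<bar> powr p) \<le> norm (C powr p * \<bar>E z \<theta>\<bar> powr p)"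
        using C
      proof eventually_elim
        case (elim \<theta>)
        then have "\<bar>\<eta> \<theta>\<bar> powr p \<le> C powr p" using p by (intro powr_mono2) auto
        then show ?case by (simp add: abs_mult powr_mult mult_right_mono)
      qed
    qed measurable
  qed
qed measurable

lemma b0_pos_AE: "AE \<theta> in \<mu>. b0 \<theta> > 0"
proof (cases isC)
  case True
  then show ?thesis using C_assms by (auto intro: AE_I2)
next
  case False
  then show ?thesis
    using Lp_model_density_pos[of p \<mu> E b0s b0] model b0s_pos b0_density by simp
qed

lemma pos_on_space_if_C:
  assumes isC "\<theta> \<in> space \<mu>"
  shows "b0 \<theta> > 0" "\<eta> \<theta> > 0" "f \<theta> > 0"
  using assms C_assms eta_pos f_pos by auto

lemma integrable_conjugate_density: "integrable \<mu> (\<lambda>\<theta>. f \<theta> powr (1 / \<gamma>) * (\<eta> \<theta> * b0 \<theta>) powr ((\<gamma> - 1) / \<gamma>))"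
proof (cases isC)
  case True
  note pos = pos_on_space_if_C[OF True]
  have "continuous_on (space \<mu>) (\<lambda>\<theta>. (f \<theta> / (\<eta> \<theta> * b0 \<theta>)) powr (1 / \<gamma>) * \<eta> \<theta>)"
    using True C_assms by (intro continuous_intros continuous_on_powr') (auto dest: pos)
  moreover have "(\<lambda>\<theta>. (f \<theta> / (\<eta> \<theta> * b0 \<theta>)) powr (1 / \<gamma>) * \<eta> \<theta>) \<in> borel_measurable \<mu>"
    by measurable
  ultimately obtain x where x: "agree isC \<mu> (E x) (\<lambda>\<theta>. (f \<theta> / (\<eta> \<theta> * b0 \<theta>)) powr (1 / \<gamma>) * \<eta> \<theta>)"
    using exists_agree True by blast
  have "E x \<theta> * b0 \<theta> = f \<theta> powr (1 / \<gamma>) * (\<eta> \<theta> * b0 \<theta>) powr ((\<gamma> - 1) / \<gamma>)"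
    if "\<theta> \<in> space \<mu>" for \<theta>
  proof -
    have "E x \<theta> * b0 \<theta> = (\<eta> \<theta> * b0 \<theta>) * (f \<theta> / (\<eta> \<theta> * b0 \<theta>)) powr (1 / \<gamma>)"
      using x True that by (simp add: agree_def)
    then show ?thesis
      using crra_maximizer_eqs(2)[OF gamma(1), of "\<eta> \<theta> * b0 \<theta>" "f \<theta>"] pos[OF that] by simp
  qed
  then show ?thesis
    using b0_density Bochner_Integration.integrable_cong[OF refl, of \<mu> "\<lambda>\<theta>. E x \<theta> * b0 \<theta>"] by simp
next
  case False
  then show ?thesis using Lp_assms by blast
qed

lemma exists_Hamiltonian_maximizer:
  assumes c: "c > 0"
  shows "\<exists>z. Xnonneg isC \<mu> E z \<and> (AE \<theta> in \<mu>. E z \<theta> = (f \<theta> / (\<eta> \<theta> * (c * b0 \<theta>))) powr (1 / \<gamma>))"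
proof -
  define g where "g \<theta> = (f \<theta> / (\<eta> \<theta> * (c * b0 \<theta>))) powr (1 / \<gamma>)" for \<theta>
  have g_meas[measurable]: "g \<in> borel_measurable \<mu>" unfolding g_def by measurable
  moreover have "continuous_on (space \<mu>) g" if isC
    unfolding g_def using that C_assms c
    by (intro continuous_intros continuous_on_powr') (auto dest: pos_on_space_if_C[OF that])
  moreover have "integrable \<mu> (\<lambda>\<theta>. \<bar>g \<theta>\<bar> powr p)" if "\<not> isC"
  proof -
    have ae: "AE \<theta> in \<mu>. \<bar>g \<theta>\<bar> powr p = (1 / c) powr (p / \<gamma>) * (f \<theta> / (\<eta> \<theta> * b0 \<theta>)) powr (p / \<gamma>)"
      using AE_space b0_pos_AE
    proof eventually_elim
      case (elim \<theta>)
      then have nonneg: "f \<theta> / (\<eta> \<theta> * b0 \<theta>) \<ge> 0" using eta_pos f_pos by (simp add: less_imp_le)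
      have "\<bar>g \<theta>\<bar> powr p = ((1 / c) * (f \<theta> / (\<eta> \<theta> * b0 \<theta>))) powr (p / \<gamma>)"
        by (simp add: g_def powr_powr mult.left_commute)
      also have "\<dots> = (1 / c) powr (p / \<gamma>) * (f \<theta> / (\<eta> \<theta> * b0 \<theta>)) powr (p / \<gamma>)"
        using c nonneg by (intro powr_mult; simp)
      finally show ?case .
    qed
    have m1: "(\<lambda>\<theta>. \<bar>g \<theta>\<bar> powr p) \<in> borel_measurable \<mu>" by measurable
    have m2: "(\<lambda>\<theta>. (1 / c) powr (p / \<gamma>) * (f \<theta> / (\<eta> \<theta> * b0 \<theta>)) powr (p / \<gamma>)) \<in> borel_measurable \<mu>"
      by measurable
    show ?thesis using integrable_cong_AE[OF m1 m2 ae] that Lp_assms by simp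
  qed
  ultimately obtain x where x: "agree isC \<mu> (E x) g"
    using exists_agree by blast
  moreover have "\<forall>\<theta>\<in>space \<mu>. g \<theta> \<ge> 0" by (simp add: g_def)
  ultimately show ?thesis
    using Xnonneg_if_agree[of isC \<mu> E x g] agree_AE[OF x] by (auto simp: g_def)
qed

lemma Hop_scaled_b0s:
  assumes c: "c > 0"
  shows "Hop isC \<mu> E \<gamma> f \<eta> (c *\<^sub>R b0s) = ereal (\<gamma> / (1 - \<gamma>) * (c powr ((\<gamma> - 1) / \<gamma>) *
    (\<integral>\<theta>. f \<theta> powr (1 / \<gamma>) * (\<eta> \<theta> * b0 \<theta>) powr ((\<gamma> - 1) / \<gamma>) \<partial>\<mu>)))"
proof -
  have ae: "AE \<theta> in \<mu>. f \<theta> powr (1 / \<gamma>) * (\<eta> \<theta> * (c * b0 \<theta>)) powr ((\<gamma> - 1) / \<gamma>)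
      = c powr ((\<gamma> - 1) / \<gamma>) * (f \<theta> powr (1 / \<gamma>) * (\<eta> \<theta> * b0 \<theta>) powr ((\<gamma> - 1) / \<gamma>))"
    using AE_space b0_pos_AE
  proof eventually_elim
    case (elim \<theta>)
    then have "\<eta> \<theta> * b0 \<theta> \<ge> 0" using eta_pos by (simp add: less_imp_le)
    then show ?case using c by (simp add: powr_mult mult_ac)
  qed
  have m1: "(\<lambda>\<theta>. f \<theta> powr (1 / \<gamma>) * (\<eta> \<theta> * (c * b0 \<theta>)) powr ((\<gamma> - 1) / \<gamma>)) \<in> borel_measurable \<mu>"
    by measurable
  have m2: "(\<lambda>\<theta>. c powr ((\<gamma> - 1) / \<gamma>) * (f \<theta> powr (1 / \<gamma>) * (\<eta> \<theta> * b0 \<theta>) powr ((\<gamma> - 1) / \<gamma>)))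
      \<in> borel_measurable \<mu>"
    by measurable
  have int: "integrable \<mu> (\<lambda>\<theta>. f \<theta> powr (1 / \<gamma>) * (\<eta> \<theta> * (c * b0 \<theta>)) powr ((\<gamma> - 1) / \<gamma>))"
    using integrable_cong_AE[OF m1 m2 ae] integrable_conjugate_density by simp
  have density: "integrable \<mu> (\<lambda>\<theta>. E x \<theta> * (c * b0 \<theta>))
      \<and> blinfun_apply (c *\<^sub>R b0s) x = (\<integral>\<theta>. E x \<theta> * (c * b0 \<theta>) \<partial>\<mu>)" for x
    using b0_density by (simp add: scaleR_blinfun.rep_eq mult.left_commute)
  have pos: "AE \<theta> in \<mu>. \<eta> \<theta> * (c * b0 \<theta>) > 0"
    using AE_space b0_pos_AE by eventually_elim (use eta_pos c in simp)
  have "Hop isC \<mu> E \<gamma> f \<eta> (c *\<^sub>R b0s) = ereal (\<gamma> / (1 - \<gamma>) *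
      (\<integral>\<theta>. f \<theta> powr (1 / \<gamma>) * (\<eta> \<theta> * (c * b0 \<theta>)) powr ((\<gamma> - 1) / \<gamma>) \<partial>\<mu>))"
    using Hop_eq_of_density[OF gamma f_pos f_meas E_meas density _ _ Nop_AE pos int
        exists_Hamiltonian_maximizer[OF c]]
    by simp
  also have "\<dots> = ereal (\<gamma> / (1 - \<gamma>) * (c powr ((\<gamma> - 1) / \<gamma>) *
      (\<integral>\<theta>. f \<theta> powr (1 / \<gamma>) * (\<eta> \<theta> * b0 \<theta>) powr ((\<gamma> - 1) / \<gamma>) \<partial>\<mu>)))"
    using integral_cong_AE[OF m1 m2 ae] by simp
  finally show ?thesis .
qed

lemma integral_conjugate_density_pos:
  assumes "blinfun_apply b0s x > 0"
  shows "(\<integral>\<theta>. f \<theta> powr (1 / \<gamma>) * (\<eta> \<theta> * b0 \<theta>) powr ((\<gamma> - 1) / \<gamma>) \<partial>\<mu>) > 0"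
proof (rule ccontr)
  assume "\<not> ?thesis"
  then have "(\<integral>\<theta>. f \<theta> powr (1 / \<gamma>) * (\<eta> \<theta> * b0 \<theta>) powr ((\<gamma> - 1) / \<gamma>) \<partial>\<mu>) = 0"
    by (simp add: integral_nonneg_AE antisym)
  then have "AE \<theta> in \<mu>. f \<theta> powr (1 / \<gamma>) * (\<eta> \<theta> * b0 \<theta>) powr ((\<gamma> - 1) / \<gamma>) = 0"
    using integral_nonneg_eq_0_iff_AE[OF integrable_conjugate_density] by simp
  then have "AE \<theta> in \<mu>. False"
    using AE_space b0_pos_AE by eventually_elim (use eta_pos f_pos in auto)
  then have "AE \<theta> in \<mu>. E x \<theta> * b0 \<theta> = 0" by eventually_elim simp
  then have "blinfun_apply b0s x = 0" using b0_density integral_eq_zero_AE by metis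
  then show False using assms by simp
qed

end

theorem proposition3p4:
  fixes \<mu> :: "'d::metric_space measure"
    and E :: "'x::banach \<Rightarrow> 'd \<Rightarrow> real"
    and isC :: bool and p :: real
    and T :: "real \<Rightarrow> ('x \<Rightarrow>\<^sub>L 'x)" and DL :: "'x set" and L :: "'x \<Rightarrow> 'x"
    and \<eta> f b0 :: "'d \<Rightarrow> real" and b0s :: "'x \<Rightarrow>\<^sub>L real"
    and \<gamma> \<rho> lam0 :: real
  assumes model: "if isC then C_model \<mu> E else Lp_model p \<mu> E"
    and semigroup: "C0_semigroup T" and generator: "is_generator T DL L"
    and dense: "closure DL = UNIV" and closed_L: "closed {(x, L x) | x. x \<in> DL}"
    and positivity: "\<forall>t\<ge>0. blinfun_apply (T t) ` X_pp isC \<mu> E \<subseteq> X_pp isC \<mu> E"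
    and eta_meas: "\<eta> \<in> borel_measurable \<mu>" and eta_pos: "\<forall>\<theta>\<in>space \<mu>. \<eta> \<theta> > 0"
    and f_meas: "f \<in> borel_measurable \<mu>" and f_pos: "\<forall>\<theta>\<in>space \<mu>. f \<theta> > 0"
    and gamma: "\<gamma> > 0" "\<gamma> \<noteq> 1" and rho: "\<rho> > 0"
    and b0_meas: "b0 \<in> borel_measurable \<mu>"
    and b0_density: "\<forall>x. integrable \<mu> (\<lambda>\<theta>. E x \<theta> * b0 \<theta>) \<and>
                         blinfun_apply b0s x = (\<integral>\<theta>. E x \<theta> * b0 \<theta> \<partial>\<mu>)"
    and A_i: "b0s \<in> Xstar_pp isC \<mu> E" "b0s \<in> adj_dom DL L" "adj_op DL L b0s = lam0 *\<^sub>R b0s"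
    and A_ii: "\<rho> > lam0 * (1 - \<gamma>)"
    and A_iii: "\<gamma> > 1 \<longrightarrow> (\<exists>C. AE \<theta> in \<mu>. \<bar>b0 \<theta> powr (1 - \<gamma>) / f \<theta>\<bar> \<le> C)"
    and A_iv: "isC \<longrightarrow> continuous_on (space \<mu>) b0 \<and> (\<forall>\<theta>\<in>space \<mu>. b0 \<theta> > 0) \<and>
                        continuous_on (space \<mu>) \<eta> \<and> continuous_on (space \<mu>) f"
    and A_v: "\<not> isC \<longrightarrow> (\<exists>C. AE \<theta> in \<mu>. \<bar>\<eta> \<theta>\<bar> \<le> C) \<and> (\<exists>C. AE \<theta> in \<mu>. \<bar>f \<theta>\<bar> \<le> C) \<and>
        integrable \<mu> (\<lambda>\<theta>. f \<theta> powr (1 / \<gamma>) * (\<eta> \<theta> * b0 \<theta>) powr ((\<gamma> - 1) / \<gamma>)) \<and>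
        integrable \<mu> (\<lambda>\<theta>. (f \<theta> / (\<eta> \<theta> * b0 \<theta>)) powr (p / \<gamma>))"
  shows "HJB_classical_solution {x. blinfun_apply b0s x > 0}
           (\<lambda>x. (\<gamma> powr \<gamma> *
                   ((\<integral>\<theta>. f \<theta> powr (1 / \<gamma>) * (\<eta> \<theta> * b0 \<theta>) powr ((\<gamma> - 1) / \<gamma>) \<partial>\<mu>)
                      / (\<rho> - lam0 * (1 - \<gamma>))) powr \<gamma>)
                 * blinfun_apply b0s x powr (1 - \<gamma>) / (1 - \<gamma>))
           \<rho> (adj_dom DL L) (adj_op DL L) (Hop isC \<mu> E \<gamma> f \<eta>)"
proof -
  interpret crra_model isC p \<mu> E \<eta> f b0 b0s \<gamma>
    by unfold_locales (fact assms)+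
  have "\<rho> - lam0 * (1 - \<gamma>) > 0" using A_ii by simp
  then show ?thesis
    by (rule HJB_classical_solution_eigenfunctional[OF dense A_i(2,3) gamma _
          Hop_scaled_b0s integral_conjugate_density_pos])
qed

end
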